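(* Let $k>0$ and consider the system of ODEs, in cylindrical coordinates $(r,\theta,z)$ on $\mathbb{R}^3$ with momenta $p_R,p_S$, \[ \dot r = p_R,\quad \dot\theta = \frac{p_S}{r^2},\quad \dot z = \frac{p_S}{2},\quad \dot p_R = \frac{p_S^2}{r^3} - \frac{2kr^3}{(r^4+16z^2)^{3/2}},\quad \dot p_S = -\frac{8kr^2 z}{(r^4+16z^2)^{3/2}}, \] with energy $H = \frac12\big(p_R^2+\frac{p_S^2}{r^2}\big) - \frac{k}{\sqrt{r^4+16z^2}}$ and first integral $F_3 = (2zp_R-rp_S)^2 + 4z^2\big(\frac{p_S^2}{r^2}+\frac{2k}{\sqrt{r^4+16z^2}}\big)$. The only trajectories of this system passing through the origin are straight lines in the plane $z=0$; along them $\theta$ is constant and $r(t)$ satisfies $\frac{\dot r^2}{2} = H + \frac{k}{r^2}$. These trajectories are exactly those with $F_3 = 0$.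
   Context: The system describes nonholonomic motion on the Heisenberg group in the potential $-k/\sqrt{r^4+16z^2}$ in cylindrical coordinates $x=r\cos\theta$, $y=r\sin\theta$. *)

theory Defs
  imports "HOL-Analysis.Analysis"
begin

text \<open>Nonholonomic Kepler-type system on the Heisenberg group in cylindrical
coordinates (r, theta, z) with momenta pR, pS.\<close>

definition energyH :: "real \<Rightarrow> real \<Rightarrow> real \<Rightarrow> real \<Rightarrow> real \<Rightarrow> real" where
  "energyH k r z pR pS = (pR\<^sup>2 + pS\<^sup>2 / r\<^sup>2) / 2 - k / sqrt (r^4 + 16 * z\<^sup>2)"

definition integralF3 :: "real \<Rightarrow> real \<Rightarrow> real \<Rightarrow> real \<Rightarrow> real \<Rightarrow> real" where
  "integralF3 k r z pR pS =
     (2 * z * pR - r * pS)\<^sup>2 + 4 * z\<^sup>2 * (pS\<^sup>2 / r\<^sup>2 + 2 * k / sqrt (r^4 + 16 * z\<^sup>2))"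

text \<open>A solution of the system on an open interval I (the system is only defined for r > 0).\<close>
definition is_solution ::
  "real \<Rightarrow> real set \<Rightarrow> (real \<Rightarrow> real) \<Rightarrow> (real \<Rightarrow> real) \<Rightarrow> (real \<Rightarrow> real)
     \<Rightarrow> (real \<Rightarrow> real) \<Rightarrow> (real \<Rightarrow> real) \<Rightarrow> bool" where
  "is_solution k I r \<theta> z pR pS \<longleftrightarrow>
     I \<noteq> {} \<and> open I \<and> is_interval I \<and>
     (\<forall>t\<in>I. r t > 0 \<and>
        (r has_real_derivative pR t) (at t) \<and>
        (\<theta> has_real_derivative pS t / (r t)\<^sup>2) (at t) \<and>
        (z has_real_derivative pS t / 2) (at t) \<and>
        (pR has_real_derivative
           (pS t)\<^sup>2 / (r t)^3 - 2 * k * (r t)^3 / ((r t)^4 + 16 * (z t)\<^sup>2) powr (3/2)) (at t) \<and>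
        (pS has_real_derivative
           - (8 * k * (r t)\<^sup>2 * z t) / ((r t)^4 + 16 * (z t)\<^sup>2) powr (3/2)) (at t))"

definition is_maximal_solution ::
  "real \<Rightarrow> real set \<Rightarrow> (real \<Rightarrow> real) \<Rightarrow> (real \<Rightarrow> real) \<Rightarrow> (real \<Rightarrow> real)
     \<Rightarrow> (real \<Rightarrow> real) \<Rightarrow> (real \<Rightarrow> real) \<Rightarrow> bool" where
  "is_maximal_solution k I r \<theta> z pR pS \<longleftrightarrow>
     is_solution k I r \<theta> z pR pS \<and>
     (\<forall>J r' \<theta>' z' pR' pS'. is_solution k J r' \<theta>' z' pR' pS' \<and> I \<subseteq> J \<and>
        (\<forall>t\<in>I. r' t = r t \<and> \<theta>' t = \<theta> t \<and> z' t = z t \<and> pR' t = pR t \<and> pS' t = pS t)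
        \<longrightarrow> J = I)"

text \<open>The trajectory passes through the origin: at some (finite) endpoint t0 of its
interval of definition, r and z tend to 0.\<close>
definition passes_origin :: "real set \<Rightarrow> (real \<Rightarrow> real) \<Rightarrow> (real \<Rightarrow> real) \<Rightarrow> bool" where
  "passes_origin I r z \<longleftrightarrow>
     (\<exists>t0. t0 \<in> closure I \<and> t0 \<notin> I \<and>
        (r \<longlongrightarrow> 0) (at t0 within I) \<and> (z \<longlongrightarrow> 0) (at t0 within I))"

end

theory Submission
  imports Defs "HOL-Library.Quadratic_Discriminant"
begin

(* H and F3 are first integrals.  F3 is a sum of nonnegative terms, the last being
   8 k z^2 / sqrt (r^4 + 16 z^2), so F3 = 0 exactly on the radial motions z = pS = 0.
   On a level set of H, F3 is bounded by a multiple of |z| + r^2 + z^2 + r^4, so along a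
   trajectory tending to the origin the constant F3 must vanish.  Conversely, on a radial
   motion pR' = -2k/r^3, hence (r^2)'' = 4 H and r^2 is a quadratic q(t) whose discriminant
   is 8k > 0.  A maximal solution then lives on a whole component of {q > 0}, and a finite
   endpoint of that component is a zero of q, i.e. a time at which the origin is reached. *)

lemma powr_three_halves:
  fixes x :: real
  assumes "0 \<le> x"
  shows "x powr (3/2) = sqrt x ^ 3"
  using assms by (cases "x = 0") (simp_all add: powr_half_sqrt_powr real_sqrt_power)

lemma real_sqrt_power4: "sqrt (x^4) = (x::real)\<^sup>2"
  by (metis abs_of_nonneg power_mult real_sqrt_abs zero_le_power2 num_double numeral_times_numeral)

lemma integralF3_nonneg: "0 \<le> k \<Longrightarrow> 0 \<le> integralF3 k r z pR pS"
  unfolding integralF3_def by (intro add_nonneg_nonneg mult_nonneg_nonneg) auto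

lemma integralF3_eq_0_iff:
  assumes "0 < k" "r \<noteq> 0"
  shows "integralF3 k r z pR pS = 0 \<longleftrightarrow> z = 0 \<and> pS = 0"
proof
  assume F: "integralF3 k r z pR pS = 0"
  define S where "S = sqrt (r^4 + 16 * z\<^sup>2)"
  have "0 < S"
    using assms(2) by (simp add: S_def add_pos_nonneg)
  then have "0 \<le> 4 * z\<^sup>2 * (pS\<^sup>2 / r\<^sup>2)" "0 \<le> 4 * z\<^sup>2 * (2 * k / S)"
    using assms(1) by simp_all
  moreover have "(2 * z * pR - r * pS)\<^sup>2 + 4 * z\<^sup>2 * (pS\<^sup>2 / r\<^sup>2) + 4 * z\<^sup>2 * (2 * k / S) = 0"
    using F by (simp add: integralF3_def S_def algebra_simps)
  ultimately have "4 * z\<^sup>2 * (2 * k / S) = 0"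
    using zero_le_power2[of "2 * z * pR - r * pS"] by linarith
  with \<open>0 < S\<close> assms(1) have "z = 0"
    by simp
  with F assms(2) show "z = 0 \<and> pS = 0"
    by (simp add: integralF3_def)
qed (simp add: integralF3_def)

lemma energyH_radial: "energyH k r 0 pR 0 = pR\<^sup>2 / 2 - k / r\<^sup>2"
  by (simp add: energyH_def real_sqrt_power4)

lemma integralF3_le_energy_bound:
  assumes k: "0 \<le> k" and r: "r \<noteq> 0"
  shows "integralF3 k r z pR pS
           \<le> 16 * \<bar>energyH k r z pR pS\<bar> * (z\<^sup>2 + r^4) + 6 * k * (\<bar>z\<bar> + r\<^sup>2)"
proof -
  define S where "S = sqrt (r^4 + 16 * z\<^sup>2)"
  define E where "E = energyH k r z pR pS"
  have Sr: "r\<^sup>2 \<le> S"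
    unfolding S_def by (rule real_le_rsqrt) (simp flip: power_mult)
  have Sz: "4 * \<bar>z\<bar> \<le> S"
    unfolding S_def by (rule real_le_rsqrt) (simp add: power2_eq_square)
  have S: "0 < S"
    using Sr r by (simp add: less_le_trans[of 0 "r\<^sup>2"])
  define a where "a = pR\<^sup>2"
  define b where "b = pS\<^sup>2 / r\<^sup>2"
  have ab: "0 \<le> a" "0 \<le> b"
    by (simp_all add: a_def b_def)
  have kinetic: "a + b = 2 * E + 2 * k / S"
    by (simp add: a_def b_def E_def S_def energyH_def)
  have "(2 * z * pR - r * pS)\<^sup>2 \<le> 2 * (2 * z * pR)\<^sup>2 + 2 * (r * pS)\<^sup>2"
    using zero_le_power2[of "2 * z * pR + r * pS"] by (simp add: power2_eq_square algebra_simps)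
  also have "\<dots> = 8 * (z\<^sup>2 * a) + 2 * (r^4 * b)"
    using r by (simp add: a_def b_def field_simps eval_nat_numeral)
  finally have cross: "(2 * z * pR - r * pS)\<^sup>2 \<le> 8 * (z\<^sup>2 * a) + 2 * (r^4 * b)" .
  have "integralF3 k r z pR pS = (2 * z * pR - r * pS)\<^sup>2 + 4 * (z\<^sup>2 * b) + 8 * k * (z\<^sup>2 / S)"
    by (simp add: integralF3_def b_def S_def algebra_simps)
  also have "\<dots> \<le> (8 * z\<^sup>2 + 2 * r^4) * (a + b) + 8 * k * (z\<^sup>2 / S)"
    using cross mult_nonneg_nonneg[OF zero_le_power2 ab(2), of z]
      mult_nonneg_nonneg[OF zero_le_even_power ab(1), of 4 r]
    by (simp add: algebra_simps)
  also have "\<dots> = 2 * E * (8 * z\<^sup>2 + 2 * r^4) + k * (24 * (z\<^sup>2 / S) + 4 * (r^4 / S))"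
    unfolding kinetic using S by (simp add: field_simps)
  also have "\<dots> \<le> 16 * \<bar>E\<bar> * (z\<^sup>2 + r^4) + 6 * k * (\<bar>z\<bar> + r\<^sup>2)"
  proof -
    have hz: "z\<^sup>2 / S \<le> \<bar>z\<bar> / 4"
      using S mult_left_mono[OF Sz, of "\<bar>z\<bar>"] by (simp add: divide_le_eq power2_eq_square field_simps)
    have hr: "r^4 / S \<le> r\<^sup>2"
      using S mult_left_mono[OF Sr, of "r\<^sup>2"] by (simp add: divide_le_eq eval_nat_numeral field_simps)
    have "24 * (z\<^sup>2 / S) + 4 * (r^4 / S) \<le> 6 * \<bar>z\<bar> + 6 * r\<^sup>2"
      using hz hr zero_le_power2[of r] by linarith
    then have "k * (24 * (z\<^sup>2 / S) + 4 * (r^4 / S)) \<le> k * (6 * \<bar>z\<bar> + 6 * r\<^sup>2)"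
      using k by (rule mult_left_mono)
    moreover have "E * (4 * z\<^sup>2 + r^4) \<le> \<bar>E\<bar> * (4 * (z\<^sup>2 + r^4))"
      by (intro mult_mono) auto
    ultimately show ?thesis
      by (simp add: algebra_simps)
  qed
  finally show ?thesis
    by (simp add: E_def)
qed

lemma DERIV_zero_constant_on_interval:
  fixes f :: "real \<Rightarrow> real"
  assumes "is_interval I" "\<And>t. t \<in> I \<Longrightarrow> (f has_real_derivative 0) (at t)"
  shows "\<exists>c. \<forall>t\<in>I. f t = c"
  using assms has_field_derivative_zero_constant[of I f] is_interval_convex has_field_derivative_at_within
  by blast

lemma is_solution_interval:
  assumes "is_solution k I r \<theta> z pR pS"
  shows "open I" "is_interval I" "I \<noteq> {}"
  using assms unfolding is_solution_def by auto

lemma is_solutionD: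
  assumes "is_solution k I r \<theta> z pR pS" "t \<in> I"
  shows "0 < r t"
    and "(r has_real_derivative pR t) (at t)"
    and "(\<theta> has_real_derivative pS t / (r t)\<^sup>2) (at t)"
    and "(z has_real_derivative pS t / 2) (at t)"
    and "(pR has_real_derivative
           (pS t)\<^sup>2 / (r t)^3 - 2 * k * (r t)^3 / sqrt ((r t)^4 + 16 * (z t)\<^sup>2) ^ 3) (at t)"
    and "(pS has_real_derivative
           - (8 * k * (r t)\<^sup>2 * z t) / sqrt ((r t)^4 + 16 * (z t)\<^sup>2) ^ 3) (at t)"
  using assms unfolding is_solution_def by (auto simp flip: powr_three_halves)

lemma solution_energyH_DERIV:
  assumes sol: "is_solution k I r \<theta> z pR pS" and t: "t \<in> I"
  shows "((\<lambda>t. energyH k (r t) (z t) (pR t) (pS t)) has_real_derivative 0) (at t)"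
proof -
  note d = is_solutionD[OF sol t]
  define S where "S = sqrt ((r t)^4 + 16 * (z t)\<^sup>2)"
  have pos: "0 < (r t)^4 + 16 * (z t)\<^sup>2"
    using d(1) by (simp add: add_pos_nonneg)
  then have nz: "S \<noteq> 0" "r t \<noteq> 0"
    using d(1) by (simp_all add: S_def)
  show ?thesis
    unfolding energyH_def
    by (rule derivative_eq_intros d(2-6) refl | (use pos nz in \<open>simp add: S_def\<close>; fail))+
      (unfold S_def[symmetric], simp add: field_simps nz, algebra)
qed

lemma solution_integralF3_DERIV:
  assumes sol: "is_solution k I r \<theta> z pR pS" and t: "t \<in> I"
  shows "((\<lambda>t. integralF3 k (r t) (z t) (pR t) (pS t)) has_real_derivative 0) (at t)"
proof -
  note d = is_solutionD[OF sol t]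
  define S where "S = sqrt ((r t)^4 + 16 * (z t)\<^sup>2)"
  have pos: "0 < (r t)^4 + 16 * (z t)\<^sup>2"
    using d(1) by (simp add: add_pos_nonneg)
  then have nz: "S \<noteq> 0" "r t \<noteq> 0"
    using d(1) by (simp_all add: S_def)
  have S2: "S\<^sup>2 = (r t)^4 + 16 * (z t)\<^sup>2"
    by (simp add: S_def)
  show ?thesis
    unfolding integralF3_def
    by (rule derivative_eq_intros d(2-6) refl | (use pos nz in \<open>simp add: S_def\<close>; fail))+
      (unfold S_def[symmetric], simp add: field_simps nz, use S2 in algebra)
qed

lemma solution_energyH_constant:
  assumes "is_solution k I r \<theta> z pR pS"
  shows "\<exists>E. \<forall>t\<in>I. energyH k (r t) (z t) (pR t) (pS t) = E"
  using assms by (intro DERIV_zero_constant_on_interval solution_energyH_DERIV is_solution_interval)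

lemma solution_integralF3_constant:
  assumes "is_solution k I r \<theta> z pR pS"
  shows "\<exists>c. \<forall>t\<in>I. integralF3 k (r t) (z t) (pR t) (pS t) = c"
  using assms by (intro DERIV_zero_constant_on_interval solution_integralF3_DERIV is_solution_interval)

lemma passes_origin_imp_integralF3_zero:
  assumes k: "0 < k" and sol: "is_solution k I r \<theta> z pR pS" and "passes_origin I r z"
  shows "\<forall>t\<in>I. integralF3 k (r t) (z t) (pR t) (pS t) = 0"
proof -
  obtain c where c: "\<forall>t\<in>I. integralF3 k (r t) (z t) (pR t) (pS t) = c"
    using solution_integralF3_constant[OF sol] by blast
  obtain E where E: "\<forall>t\<in>I. energyH k (r t) (z t) (pR t) (pS t) = E"
    using solution_energyH_constant[OF sol] by blast
  obtain t0 where t0: "t0 \<in> closure I" "t0 \<notin> I"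
    and lim: "(r \<longlongrightarrow> 0) (at t0 within I)" "(z \<longlongrightarrow> 0) (at t0 within I)"
    using \<open>passes_origin I r z\<close> unfolding passes_origin_def by blast
  define bound where "bound t = 16 * \<bar>E\<bar> * ((z t)\<^sup>2 + (r t)^4) + 6 * k * (\<bar>z t\<bar> + (r t)\<^sup>2)" for t
  obtain t1 where "t1 \<in> I"
    using is_solution_interval(3)[OF sol] by blast
  then have "0 \<le> c"
    using c integralF3_nonneg[of k] k by force
  have "c \<le> bound t" if "t \<in> I" for t
  proof -
    have "r t \<noteq> 0"
      using is_solutionD(1)[OF sol that] by simp
    then show ?thesis
      using integralF3_le_energy_bound[of k "r t" "z t" "pR t" "pS t"] k c E that
      by (simp add: bound_def)
  qed
  then have "eventually (\<lambda>t. c \<le> bound t) (at t0 within I)"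
    by (auto simp: eventually_at_filter)
  moreover have "(bound \<longlongrightarrow> 16 * \<bar>E\<bar> * (0\<^sup>2 + 0^4) + 6 * k * (\<bar>0\<bar> + 0\<^sup>2)) (at t0 within I)"
    unfolding bound_def by (intro tendsto_intros lim)
  then have "(bound \<longlongrightarrow> 0) (at t0 within I)"
    by simp
  ultimately have "((\<lambda>_. c) \<longlongrightarrow> 0) (at t0 within I)"
    using \<open>0 \<le> c\<close> by (intro tendsto_sandwich[of "\<lambda>_. 0" "\<lambda>_. c" _ bound]) simp_all
  moreover have "at t0 within I \<noteq> bot"
    using t0 by (simp add: trivial_limit_within closure_def)
  ultimately have "c = 0"
    using tendsto_unique tendsto_const by metis
  with c show ?thesis
    by simp
qed

lemma solution_theta_constant:
  assumes sol: "is_solution k I r \<theta> z pR pS" and "\<forall>t\<in>I. pS t = 0"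
  shows "\<exists>c. \<forall>t\<in>I. \<theta> t = c"
  using assms is_solutionD(3)[OF sol]
  by (intro DERIV_zero_constant_on_interval is_solution_interval[OF sol]) auto

lemma radial_solution_energy:
  assumes sol: "is_solution k I r \<theta> z pR pS" and radial: "\<forall>t\<in>I. z t = 0 \<and> pS t = 0"
  shows "\<exists>E. \<forall>t\<in>I. energyH k (r t) (z t) (pR t) (pS t) = E \<and> (pR t)\<^sup>2 / 2 = E + k / (r t)\<^sup>2"
proof -
  obtain E where "\<forall>t\<in>I. energyH k (r t) (z t) (pR t) (pS t) = E"
    using solution_energyH_constant[OF sol] by blast
  with radial show ?thesis
    by (auto simp: energyH_radial intro!: exI[of _ E])
qed

lemma radial_solution_r_squared:
  assumes sol: "is_solution k I r \<theta> z pR pS" and radial: "\<forall>t\<in>I. z t = 0 \<and> pS t = 0"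
    and E: "\<forall>t\<in>I. (pR t)\<^sup>2 / 2 = E + k / (r t)\<^sup>2" and t1: "t1 \<in> I"
  shows "\<forall>t\<in>I. 2 * r t * pR t = 4 * E * (t - t1) + 2 * r t1 * pR t1
               \<and> (r t)\<^sup>2 = 2 * E * (t - t1)\<^sup>2 + 2 * r t1 * pR t1 * (t - t1) + (r t1)\<^sup>2"
proof -
  note interval = is_solution_interval(2)[OF sol]
  have pR': "(pR has_real_derivative - 2 * k / (r t)^3) (at t)" if "t \<in> I" for t
  proof -
    have "sqrt ((r t)^4 + 16 * (z t)\<^sup>2) ^ 3 = ((r t)\<^sup>2)^3"
      using radial that by (simp add: real_sqrt_power4)
    then show ?thesis
      using is_solutionD(5)[OF sol that] radial that is_solutionD(1)[OF sol that]
      by (simp add: field_simps eval_nat_numeral)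
  qed
  obtain c where c: "\<forall>t\<in>I. 2 * r t * pR t - 4 * E * (t - t1) = c"
  proof (atomize_elim, rule DERIV_zero_constant_on_interval[OF interval])
    fix t assume t: "t \<in> I"
    have "(pR t)\<^sup>2 = 2 * E + 2 * k / (r t)\<^sup>2"
      using E t by (simp add: field_simps)
    then show "((\<lambda>t. 2 * r t * pR t - 4 * E * (t - t1)) has_real_derivative 0) (at t)"
      using is_solutionD(1)[OF sol t]
      by (auto intro!: derivative_eq_intros is_solutionD(2)[OF sol t] pR'[OF t]
          simp: field_simps power2_eq_square power3_eq_cube)
  qed
  have velocity: "\<forall>t\<in>I. 2 * r t * pR t = 4 * E * (t - t1) + 2 * r t1 * pR t1"
    using c[rule_format, OF t1] c by auto
  obtain c' where c': "\<forall>t\<in>I. (r t)\<^sup>2 - (2 * E * (t - t1)\<^sup>2 + 2 * r t1 * pR t1 * (t - t1)) = c'"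
  proof (atomize_elim, rule DERIV_zero_constant_on_interval[OF interval])
    fix t assume t: "t \<in> I"
    show "((\<lambda>t. (r t)\<^sup>2 - (2 * E * (t - t1)\<^sup>2 + 2 * r t1 * pR t1 * (t - t1))) has_real_derivative 0) (at t)"
      using velocity t
      by (auto intro!: derivative_eq_intros is_solutionD(2)[OF sol t] simp: algebra_simps)
  qed
  then show ?thesis
    using c'[rule_format, OF t1] velocity by auto
qed

lemma is_solution_sqrt_quadratic:
  assumes J: "open J" "is_interval J" "J \<noteq> {}" and pos: "\<And>t. t \<in> J \<Longrightarrow> 0 < q t"
    and q': "\<And>t. (q has_real_derivative dq t) (at t)"
    and dq': "\<And>t. (dq has_real_derivative 4 * E) (at t)"
    and disc: "\<And>t. (dq t)\<^sup>2 - 8 * E * q t = 8 * k"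
  shows "is_solution k J (\<lambda>t. sqrt (q t)) (\<lambda>_. \<theta>0) (\<lambda>_. 0) (\<lambda>t. dq t / (2 * sqrt (q t))) (\<lambda>_. 0)"
  unfolding is_solution_def
proof (intro conjI ballI J)
  fix t assume "t \<in> J"
  define s where "s = sqrt (q t)"
  have "0 < q t"
    using pos \<open>t \<in> J\<close> .
  then have s: "0 < s" "s\<^sup>2 = q t"
    by (simp_all add: s_def)
  show "0 < sqrt (q t)"
    using s by (simp add: s_def)
  show "((\<lambda>t. sqrt (q t)) has_real_derivative dq t / (2 * sqrt (q t))) (at t)"
    using DERIV_chain2[OF DERIV_real_sqrt[OF \<open>0 < q t\<close>] q'] by (simp add: field_simps)
  show "((\<lambda>_. \<theta>0) has_real_derivative 0 / (sqrt (q t))\<^sup>2) (at t)"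
    and "((\<lambda>_. 0) has_real_derivative 0 / 2) (at t)"
    and "((\<lambda>_. 0) has_real_derivative
           - (8 * k * (sqrt (q t))\<^sup>2 * 0) / ((sqrt (q t))^4 + 16 * 0\<^sup>2) powr (3/2)) (at t)"
    by simp_all
  have "(s^4 + 16 * 0\<^sup>2) powr (3/2) = s^6"
    by (simp add: powr_three_halves real_sqrt_power4 flip: power_mult)
  then have target: "0\<^sup>2 / s^3 - 2 * k * s^3 / (s^4 + 16 * 0\<^sup>2) powr (3/2)
      = (8 * E * s\<^sup>2 - (dq t)\<^sup>2) / (4 * s^3)"
    using s disc[of t] by (simp add: field_simps)
  have "((\<lambda>t. dq t / (2 * sqrt (q t))) has_real_derivative
          (4 * E * (2 * s) - dq t * (2 * (dq t / (2 * s)))) / (2 * s)\<^sup>2) (at t)"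
    using \<open>0 < q t\<close> unfolding s_def
    by (auto intro!: derivative_eq_intros q' dq' simp: field_simps power2_eq_square)
  then show "((\<lambda>t. dq t / (2 * sqrt (q t))) has_real_derivative
      0\<^sup>2 / (sqrt (q t))^3 - 2 * k * (sqrt (q t))^3 / ((sqrt (q t))^4 + 16 * 0\<^sup>2) powr (3/2)) (at t)"
    unfolding s_def[symmetric] target using s(1) by (simp add: field_simps power2_eq_square power3_eq_cube)
qed

lemma discrim_pos_root_exists:
  fixes a b c :: real
  assumes "0 < discrim a b c"
  shows "\<exists>x. a * x\<^sup>2 + b * x + c = 0"
proof (cases "a = 0")
  case True
  with assms have "b \<noteq> 0"
    by (simp add: discrim_def)
  with True show ?thesis
    by (intro exI[of _ "- c / b"]) simp
qed (use assms discriminant_nonneg_ex in auto)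

lemma connected_component_positive_frontier_zero:
  fixes q :: "'a::real_normed_vector \<Rightarrow> real"
  assumes q: "continuous_on UNIV q" and "0 < q t1" "q ts \<le> 0"
  shows "\<exists>t0\<in>frontier (connected_component_set {t. 0 < q t} t1). q t0 = 0"
proof -
  define U where "U = {t. 0 < q t}"
  have "open U"
    unfolding U_def by (rule open_Collect_less[OF continuous_on_const q])
  have "closure U \<subseteq> {t. 0 \<le> q t}"
    unfolding U_def by (intro closure_minimal closed_Collect_le[OF continuous_on_const q]) auto
  have "t1 \<in> connected_component_set U t1"
    using \<open>0 < q t1\<close> by (simp add: U_def)
  moreover have "ts \<notin> connected_component_set U t1"
    using connected_component_subset[of U t1] \<open>q ts \<le> 0\<close> by (force simp: U_def)
  ultimately obtain t0 where "t0 \<in> frontier (connected_component_set U t1)"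
    using frontier_not_empty[of "connected_component_set U t1"] by blast
  moreover have "t0 \<in> closure U - U" if "t0 \<in> frontier U"
    using that \<open>open U\<close> by (simp add: frontier_def interior_open)
  ultimately have "0 \<le> q t0" "\<not> 0 < q t0"
    using frontier_of_connected_component_subset[of U t1] \<open>closure U \<subseteq> {t. 0 \<le> q t}\<close>
    by (auto simp: U_def)
  then show ?thesis
    using \<open>t0 \<in> frontier (connected_component_set U t1)\<close> unfolding U_def by force
qed

lemma passes_origin_at_frontier:
  assumes "open I" "t0 \<in> frontier I" "isCont q t0" "q t0 = 0"
    and "\<forall>t\<in>I. r t = sqrt (q t)" "\<forall>t\<in>I. z t = 0"
  shows "passes_origin I r z"
  unfolding passes_origin_def
proof (intro exI conjI)
  show "t0 \<in> closure I" "t0 \<notin> I"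
    using assms(1,2) by (auto simp: frontier_def interior_open)
  have "(q \<longlongrightarrow> q t0) (at t0 within I)"
    using assms(3) unfolding isCont_def by (rule Lim_at_imp_Lim_at_within)
  then have "((\<lambda>t. sqrt (q t)) \<longlongrightarrow> sqrt (q t0)) (at t0 within I)"
    by (rule tendsto_real_sqrt)
  moreover have "eventually (\<lambda>t. sqrt (q t) = r t) (at t0 within I)"
    using assms(5) by (auto simp: eventually_at_filter)
  ultimately show "(r \<longlongrightarrow> 0) (at t0 within I)"
    using assms(4) by (simp add: tendsto_cong)
  have "eventually (\<lambda>t. 0 = z t) (at t0 within I)"
    using assms(6) by (auto simp: eventually_at_filter)
  from tendsto_cong[OF this, of 0] show "(z \<longlongrightarrow> 0) (at t0 within I)"
    by simp
qed

lemma radial_solution_sqrt_quadratic: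
  assumes k: "0 < k" and sol: "is_solution k I r \<theta> z pR pS"
    and radial: "\<forall>t\<in>I. z t = 0 \<and> pS t = 0"
    and E: "\<forall>t\<in>I. (pR t)\<^sup>2 / 2 = E + k / (r t)\<^sup>2"
  obtains q dq :: "real \<Rightarrow> real"
  where "\<And>t. (q has_real_derivative dq t) (at t)" "\<And>t. (dq has_real_derivative 4 * E) (at t)"
    and "\<And>t. (dq t)\<^sup>2 - 8 * E * q t = 8 * k" and "\<exists>ts. q ts = 0"
    and "\<And>t. t \<in> I \<Longrightarrow> r t = sqrt (q t) \<and> pR t = dq t / (2 * sqrt (q t))"
proof -
  obtain t1 where t1: "t1 \<in> I"
    using is_solution_interval(3)[OF sol] by blast
  define b where "b = 2 * r t1 * pR t1"
  define q where "q t = 2 * E * (t - t1)\<^sup>2 + b * (t - t1) + (r t1)\<^sup>2" for t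
  define dq where "dq t = 4 * E * (t - t1) + b" for t
  have q': "(q has_real_derivative dq t) (at t)" for t
    unfolding q_def dq_def by (auto intro!: derivative_eq_intros simp: field_simps)
  have dq': "(dq has_real_derivative 4 * E) (at t)" for t
    unfolding dq_def by (auto intro!: derivative_eq_intros)
  have "(pR t1)\<^sup>2 * (r t1)\<^sup>2 = 2 * E * (r t1)\<^sup>2 + 2 * k"
    using E t1 is_solutionD(1)[OF sol t1] by (simp add: field_simps)
  then have disc: "(dq t)\<^sup>2 - 8 * E * q t = 8 * k" for t
    unfolding q_def dq_def b_def by (simp add: power2_eq_square algebra_simps)
  have "0 < discrim (2 * E) b ((r t1)\<^sup>2)"
    using disc[of t1] k by (simp add: discrim_def q_def dq_def)
  then obtain x where "2 * E * x\<^sup>2 + b * x + (r t1)\<^sup>2 = 0"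
    using discrim_pos_root_exists by blast
  then have "q (x + t1) = 0"
    by (simp add: q_def)
  moreover have "r t = sqrt (q t) \<and> pR t = dq t / (2 * sqrt (q t))" if "t \<in> I" for t
  proof -
    have "2 * r t * pR t = dq t" "(r t)\<^sup>2 = q t"
      using radial_solution_r_squared[OF sol radial E t1] that by (auto simp: q_def dq_def b_def)
    moreover from this(2) have "sqrt (q t) = r t"
      using is_solutionD(1)[OF sol that] by (auto intro: real_sqrt_unique)
    ultimately show ?thesis
      using is_solutionD(1)[OF sol that] by (auto simp: field_simps)
  qed
  ultimately show ?thesis
    using that q' dq' disc by blast
qed

lemma maximal_solution_sqrt_quadratic_passes_origin:
  assumes max: "is_maximal_solution k I r \<theta> z pR pS"
    and q': "\<And>t. (q has_real_derivative dq t) (at t)"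
    and dq': "\<And>t. (dq has_real_derivative 4 * E) (at t)"
    and disc: "\<And>t. (dq t)\<^sup>2 - 8 * E * q t = 8 * k" and root: "q ts = 0"
    and sqrt_q: "\<And>t. t \<in> I \<Longrightarrow> r t = sqrt (q t) \<and> pR t = dq t / (2 * sqrt (q t))"
    and radial: "\<forall>t\<in>I. \<theta> t = \<theta>0 \<and> z t = 0 \<and> pS t = 0"
  shows "passes_origin I r z"
proof -
  have sol: "is_solution k I r \<theta> z pR pS"
    using max unfolding is_maximal_solution_def by blast
  note I = is_solution_interval[OF sol]
  obtain t1 where t1: "t1 \<in> I"
    using I(3) by blast
  have cont: "continuous_on UNIV q"
    using q' by (meson DERIV_isCont continuous_at_imp_continuous_on)
  define J where "J = connected_component_set {t. 0 < q t} t1"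
  have "I \<subseteq> {t. 0 < q t}"
    using sqrt_q is_solutionD(1)[OF sol] by force
  then have "I \<subseteq> J"
    unfolding J_def using t1 I(2) by (intro connected_component_maximal) (auto simp: is_interval_connected_1)
  have "is_solution k J (\<lambda>t. sqrt (q t)) (\<lambda>_. \<theta>0) (\<lambda>_. 0) (\<lambda>t. dq t / (2 * sqrt (q t))) (\<lambda>_. 0)"
  proof (rule is_solution_sqrt_quadratic[OF _ _ _ _ q' dq' disc])
    show "open J"
      unfolding J_def by (intro open_connected_component open_Collect_less continuous_on_const cont)
    show "is_interval J"
      unfolding J_def by (simp add: is_interval_connected_1)
    show "J \<noteq> {}" "\<And>t. t \<in> J \<Longrightarrow> 0 < q t"
      using \<open>I \<subseteq> J\<close> t1 connected_component_subset[of "{t. 0 < q t}" t1] by (auto simp: J_def)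
  qed
  moreover have "\<And>J r' \<theta>' z' pR' pS'. is_solution k J r' \<theta>' z' pR' pS' \<Longrightarrow> I \<subseteq> J \<Longrightarrow>
      \<forall>t\<in>I. r' t = r t \<and> \<theta>' t = \<theta> t \<and> z' t = z t \<and> pR' t = pR t \<and> pS' t = pS t \<Longrightarrow> J = I"
    using max unfolding is_maximal_solution_def by blast
  ultimately have "J = I"
    using \<open>I \<subseteq> J\<close> sqrt_q radial by simp
  obtain t0 where "t0 \<in> frontier J" "q t0 = 0"
    using connected_component_positive_frontier_zero[OF cont _ eq_refl[OF root]] \<open>I \<subseteq> {t. 0 < q t}\<close> t1
    unfolding J_def by blast
  moreover have "isCont q t0"
    using cont by (simp add: continuous_on_eq_continuous_at)
  ultimately show ?thesis
    using passes_origin_at_frontier[OF I(1)] \<open>J = I\<close> sqrt_q radial by blast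
qed

lemma maximal_radial_solution_passes_origin:
  assumes k: "0 < k" and max: "is_maximal_solution k I r \<theta> z pR pS"
    and radial: "\<forall>t\<in>I. z t = 0 \<and> pS t = 0"
  shows "passes_origin I r z"
proof -
  have sol: "is_solution k I r \<theta> z pR pS"
    using max unfolding is_maximal_solution_def by blast
  obtain E where E: "\<forall>t\<in>I. (pR t)\<^sup>2 / 2 = E + k / (r t)\<^sup>2"
    using radial_solution_energy[OF sol radial] by blast
  obtain \<theta>0 where "\<forall>t\<in>I. \<theta> t = \<theta>0"
    using solution_theta_constant[OF sol] radial by blast
  with radial have "\<forall>t\<in>I. \<theta> t = \<theta>0 \<and> z t = 0 \<and> pS t = 0"
    by blast
  moreover obtain q dq where "\<And>t. (q has_real_derivative dq t) (at t)"
    "\<And>t. (dq has_real_derivative 4 * E) (at t)" "\<And>t. (dq t)\<^sup>2 - 8 * E * q t = 8 * k"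
    "\<exists>ts. q ts = 0" "\<And>t. t \<in> I \<Longrightarrow> r t = sqrt (q t) \<and> pR t = dq t / (2 * sqrt (q t))"
    using radial_solution_sqrt_quadratic[OF k sol radial E] by blast
  ultimately show ?thesis
    using maximal_solution_sqrt_quadratic_passes_origin[OF max] by blast
qed

theorem theorem4:
  fixes k :: real and I :: "real set" and r \<theta> z pR pS :: "real \<Rightarrow> real"
  assumes "k > 0"
    and sol: "is_solution k I r \<theta> z pR pS"
  shows "(passes_origin I r z \<longrightarrow>
            (\<forall>t\<in>I. z t = 0) \<and>
            (\<forall>s\<in>I. \<forall>t\<in>I. \<theta> s = \<theta> t) \<and>
            (\<exists>E. \<forall>t\<in>I. energyH k (r t) (z t) (pR t) (pS t) = E \<and>
                        (pR t)\<^sup>2 / 2 = E + k / (r t)\<^sup>2) \<and>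
            (\<forall>t\<in>I. integralF3 k (r t) (z t) (pR t) (pS t) = 0))
       \<and> (is_maximal_solution k I r \<theta> z pR pS \<longrightarrow>
            (passes_origin I r z \<longleftrightarrow> (\<exists>t\<in>I. integralF3 k (r t) (z t) (pR t) (pS t) = 0)))"
proof -
  let ?F3 = "\<lambda>t. integralF3 k (r t) (z t) (pR t) (pS t)"
  have radial: "\<forall>t\<in>I. z t = 0 \<and> pS t = 0" if "\<forall>t\<in>I. ?F3 t = 0"
    using that integralF3_eq_0_iff[OF \<open>k > 0\<close>] is_solutionD(1)[OF sol] by force
  have "\<forall>t\<in>I. ?F3 t = 0" if "\<exists>t\<in>I. ?F3 t = 0"
    using that solution_integralF3_constant[OF sol] by force
  then have "is_maximal_solution k I r \<theta> z pR pS \<longrightarrow> (\<exists>t\<in>I. ?F3 t = 0) \<longrightarrow> passes_origin I r z"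
    using radial maximal_radial_solution_passes_origin[OF \<open>k > 0\<close>] by blast
  moreover have "passes_origin I r z \<longrightarrow> (\<forall>t\<in>I. ?F3 t = 0)"
    using passes_origin_imp_integralF3_zero[OF \<open>k > 0\<close> sol] by blast
  moreover have "\<exists>E. \<forall>t\<in>I. energyH k (r t) (z t) (pR t) (pS t) = E \<and> (pR t)\<^sup>2 / 2 = E + k / (r t)\<^sup>2"
    if "\<forall>t\<in>I. ?F3 t = 0"
    using radial[OF that] radial_solution_energy[OF sol] by blast
  moreover have "\<forall>s\<in>I. \<forall>t\<in>I. \<theta> s = \<theta> t" if "\<forall>t\<in>I. ?F3 t = 0"
    using radial[OF that] solution_theta_constant[OF sol] by metis
  ultimately show ?thesis
    using radial is_solution_interval(3)[OF sol] by blast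
qed

end
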